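(* Let $A$ be a normal tensor with bond dimension $D_{\mathbb{1}}$ and injectivity length $L_I$, and let $|\psi\rangle=|\psi_N(A)\rangle$ be the translationally invariant MPS it generates on $N$ sites. Suppose $|\psi\rangle$ has the exact MPS-up$_{0,D}$ property and $N > L_I(\log_2 D + 1)$. Then $|\psi\rangle$ is a product state, $|\psi\rangle = |\phi\rangle^{\otimes N}$ for some $|\phi\rangle\in\mathbb{C}^d$.
   Context: An MPS on $N$ sites with physical dimension $d$ is $|\psi\rangle=\sum_{i_1,\dots,i_N=1}^d \mathrm{Tr}[A^{[1],i_1}\cdots A^{[N],i_N}]|i_1\dots i_N\rangle$, where $A^{[n],i}$ are $D_n\times D_{n+1}$ complex matrices ($D_{N+1}=D_1$); it is translationally invariant (TI), written $|\psi_N(A)\rangle$, if all $A^{[n]}=A$ with $A^i\in\mathcal{M}_{D_{\mathbb{1}}}(\mathbb{C})$. A tensor $A$ is normal if the matrices $\{A^i\}$ have no nontrivial common invariant subspace and the completely positive map $\mathcal{E}(X)=\sum_i A^iX(A^i)^\dagger$ has a unique eigenvalue of largest magnitude, equal to $1$. Blocking $L$ sites gives the tensor with matrices $A^{i_1}\cdots A^{i_L}$ indexed by $(i_1,\dots,i_L)$; a tensor is injective if the map $X\mapsto\sum_{i}\mathrm{Tr}[XA^{i}]|i\rangle$ from $\mathcal{M}_{D_{\mathbb{1}}}(\mathbb{C})$ to the physical space is injective. The injectivity length $L_I$ of a normal tensor is the number of sites after whose blocking the tensor becomes injective (injectivity then persists for larger blocks). A state $|\psi\rangle\in(\mathbb{C}^d)^{\otimes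 N}$ is an MPS-up$_{\varepsilon,D}$ if for every permutation $\pi$ of the $N$ sites, with $U_\pi$ the unitary permuting the tensor factors accordingly, there is an MPS state (open boundary, bond dimensions at most $D$) $|\psi_\pi\rangle$ with $\|U_\pi|\psi\rangle-|\psi_\pi\rangle\|\le\varepsilon$; equivalently, for every bipartition of the sites there is a state $\varepsilon$-close to $|\psi\rangle$ with Schmidt rank at most $D$ across it. Exact MPS-up means $\varepsilon=0$, i.e. Schmidt rank at most $D$ across every bipartition. *)

theory Defs
  imports Complex_Main "Jordan_Normal_Form.Matrix" "Jordan_Normal_Form.Schur_Decomposition"
begin

text \<open>A state of (C^d)^{N} is a function from configurations to complex amplitudes.\<close>

definition tensor :: "nat \<Rightarrow> nat \<Rightarrow> (nat \<Rightarrow> complex mat) \<Rightarrow> bool" where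
  "tensor d D A \<longleftrightarrow> (\<forall>i<d. A i \<in> carrier_mat D D)"

definition configs :: "nat \<Rightarrow> nat \<Rightarrow> (nat \<Rightarrow> nat) set" where
  "configs d N = {i. (\<forall>n<N. i n < d) \<and> (\<forall>n\<ge>N. i n = 0)}"

definition mtrace :: "complex mat \<Rightarrow> complex" where
  "mtrace M = (\<Sum>k<dim_row M. M $$ (k, k))"

definition word_prod :: "nat \<Rightarrow> (nat \<Rightarrow> complex mat) \<Rightarrow> nat \<Rightarrow> (nat \<Rightarrow> nat) \<Rightarrow> complex mat" where
  "word_prod D A L w = foldr (\<lambda>n M. A (w n) * M) [0..<L] (1\<^sub>m D)"

definition ti_mps :: "nat \<Rightarrow> (nat \<Rightarrow> complex mat) \<Rightarrow> nat \<Rightarrow> (nat \<Rightarrow> nat) \<Rightarrow> complex" where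
  "ti_mps D A N i = mtrace (word_prod D A N i)"

definition subspace_vec :: "nat \<Rightarrow> complex vec set \<Rightarrow> bool" where
  "subspace_vec D V \<longleftrightarrow> V \<subseteq> carrier_vec D \<and> 0\<^sub>v D \<in> V \<and>
     (\<forall>u\<in>V. \<forall>v\<in>V. u + v \<in> V) \<and> (\<forall>c. \<forall>v\<in>V. c \<cdot>\<^sub>v v \<in> V)"

definition transfer_map :: "nat \<Rightarrow> nat \<Rightarrow> (nat \<Rightarrow> complex mat) \<Rightarrow> complex mat \<Rightarrow> complex mat" where
  "transfer_map d D A X = foldr (\<lambda>i M. A i * X * mat_adjoint (A i) + M) [0..<d] (0\<^sub>m D D)"

definition transfer_eigenvalue :: "nat \<Rightarrow> nat \<Rightarrow> (nat \<Rightarrow> complex mat) \<Rightarrow> complex \<Rightarrow> bool" where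
  "transfer_eigenvalue d D A lam \<longleftrightarrow>
     (\<exists>X \<in> carrier_mat D D. X \<noteq> 0\<^sub>m D D \<and> transfer_map d D A X = lam \<cdot>\<^sub>m X)"

definition normal_tensor :: "nat \<Rightarrow> nat \<Rightarrow> (nat \<Rightarrow> complex mat) \<Rightarrow> bool" where
  "normal_tensor d D A \<longleftrightarrow> tensor d D A \<and>
     (\<forall>V. subspace_vec D V \<and> (\<forall>i<d. \<forall>v\<in>V. A i *\<^sub>v v \<in> V) \<longrightarrow> V = {0\<^sub>v D} \<or> V = carrier_vec D) \<and>
     transfer_eigenvalue d D A 1 \<and>
     (\<forall>lam. transfer_eigenvalue d D A lam \<and> lam \<noteq> 1 \<longrightarrow> cmod lam < 1)"

definition injective_block :: "nat \<Rightarrow> nat \<Rightarrow> (nat \<Rightarrow> complex mat) \<Rightarrow> nat \<Rightarrow> bool" where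
  "injective_block d D A L \<longleftrightarrow>
     inj_on (\<lambda>X. \<lambda>w \<in> configs d L. mtrace (X * word_prod D A L w)) (carrier_mat D D)"

definition injectivity_length :: "nat \<Rightarrow> nat \<Rightarrow> (nat \<Rightarrow> complex mat) \<Rightarrow> nat \<Rightarrow> bool" where
  "injectivity_length d D A L \<longleftrightarrow> L \<ge> 1 \<and> (\<forall>L'\<ge>L. injective_block d D A L') \<and>
     (\<forall>L'. 1 \<le> L' \<and> L' < L \<longrightarrow> \<not> injective_block d D A L')"

definition schmidt_rank_le :: "nat \<Rightarrow> nat \<Rightarrow> ((nat \<Rightarrow> nat) \<Rightarrow> complex) \<Rightarrow> nat set \<Rightarrow> nat \<Rightarrow> bool" where
  "schmidt_rank_le d N psi S D \<longleftrightarrow>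
     (\<exists>u v :: nat \<Rightarrow> (nat \<Rightarrow> nat) \<Rightarrow> complex. \<forall>i\<in>configs d N.
        psi i = (\<Sum>k<D. u k (\<lambda>n. if n \<in> S then i n else 0) * v k (\<lambda>n. if n \<in> S then 0 else i n)))"

definition exact_mps_up :: "nat \<Rightarrow> nat \<Rightarrow> ((nat \<Rightarrow> nat) \<Rightarrow> complex) \<Rightarrow> nat \<Rightarrow> bool" where
  "exact_mps_up d N psi D \<longleftrightarrow> (\<forall>S \<subseteq> {0..<N}. schmidt_rank_le d N psi S D)"

end

theory Submission
  imports Defs "HOL-Library.Function_Algebras"
begin

text \<open>If the bond dimension is \<open>1\<close> the state is a product, so let it be \<open>D1 \<ge> 2\<close> and let \<open>L\<close>
  be the injectivity length. By injectivity, linear combinations of words of length \<open>L\<close> realise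
  every matrix unit. Cut the chain into \<open>m + 1\<close> blocks of length \<open>L\<close> on one side, interleaved
  with \<open>m\<close> blocks of length \<open>L\<close> and a last block of length \<open>r\<close> on the other. Feeding matrix
  units into the blocks, the pairing of the state with product functionals on the two sides
  becomes the trace of a product in which matrix units alternate with the right-hand blocks, and
  this trace is an indicator. This gives a biorthogonal system of size \<open>(D1\<^sup>2)\<^sup>m\<close> times the
  number of entries that words of length \<open>r\<close> can separate: all \<open>D1\<^sup>2\<close> entries if \<open>r \<ge> L\<close>, and
  at least two as soon as \<open>r \<ge> 1\<close>, since otherwise all words of length \<open>r\<close>, hence all words of
  length \<open>r L\<close>, would be proportional to one matrix. So the Schmidt rank across the cut is at
  least \<open>2\<^sup>n\<close> whenever \<open>n L < N\<close>, and \<open>N > L (log\<^sub>2 D + 1)\<close> leaves room for an \<open>n\<close> with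
  \<open>2\<^sup>n > D\<close>.\<close>

section \<open>Words and their linear combinations\<close>

definition take_cfg :: "nat \<Rightarrow> (nat \<Rightarrow> nat) \<Rightarrow> nat \<Rightarrow> nat" where
  "take_cfg l i = (\<lambda>n. if n < l then i n else 0)"

definition drop_cfg :: "nat \<Rightarrow> (nat \<Rightarrow> nat) \<Rightarrow> nat \<Rightarrow> nat" where
  "drop_cfg l i = (\<lambda>n. i (n + l))"

definition append_cfg :: "nat \<Rightarrow> (nat \<Rightarrow> nat) \<Rightarrow> (nat \<Rightarrow> nat) \<Rightarrow> nat \<Rightarrow> nat" where
  "append_cfg l x y = (\<lambda>n. if n < l then x n else y (n - l))"

lemma drop_cfg_drop_cfg: "drop_cfg a (drop_cfg b i) = drop_cfg (a + b) i"
  by (simp add: drop_cfg_def ac_simps)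

lemma take_cfg_in_configs: "i \<in> configs d (a + b) \<Longrightarrow> take_cfg a i \<in> configs d a"
  by (auto simp: configs_def take_cfg_def)

lemma drop_cfg_in_configs: "i \<in> configs d (a + b) \<Longrightarrow> drop_cfg a i \<in> configs d b"
  by (auto simp: configs_def drop_cfg_def)

lemma bij_betw_configs_append:
  "bij_betw (\<lambda>i. (take_cfg a i, drop_cfg a i)) (configs d (a + b)) (configs d a \<times> configs d b)"
  by (rule bij_betw_byWitness[where f' = "\<lambda>(x, y). append_cfg a x y"])
     (auto simp: configs_def take_cfg_def drop_cfg_def append_cfg_def fun_eq_iff)

lemma finite_configs: "finite (configs d l)"
proof -
  have "configs d l \<subseteq> (\<lambda>f n. if n < l then f n else 0) ` (PiE {..<l} (\<lambda>_. {..<d}))"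
  proof
    fix i assume i: "i \<in> configs d l"
    then have "i = (\<lambda>n. if n < l then restrict i {..<l} n else 0)"
      by (auto simp: configs_def fun_eq_iff)
    moreover have "restrict i {..<l} \<in> PiE {..<l} (\<lambda>_. {..<d})"
      using i by (auto simp: configs_def)
    ultimately show "i \<in> (\<lambda>f n. if n < l then f n else 0) ` (PiE {..<l} (\<lambda>_. {..<d}))"
      by blast
  qed
  then show ?thesis
    by (rule finite_subset) (auto intro!: finite_PiE)
qed

lemma word_prod_0 [simp]: "word_prod D A 0 i = 1\<^sub>m D"
  by (simp add: word_prod_def)

lemma word_prod_Suc: "word_prod D A (Suc l) i = A (i 0) * word_prod D A l (drop_cfg 1 i)"
proof -
  have "[0..<Suc l] = 0 # map Suc [0..<l]"
    by (simp add: map_Suc_upt upt_conv_Cons)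
  then show ?thesis
    by (simp add: word_prod_def drop_cfg_def foldr_map o_def)
qed

lemma word_prod_carrier:
  "tensor d D A \<Longrightarrow> (\<And>n. n < l \<Longrightarrow> i n < d) \<Longrightarrow> word_prod D A l i \<in> carrier_mat D D"
proof (induction l arbitrary: i)
  case (Suc l)
  have "word_prod D A l (drop_cfg 1 i) \<in> carrier_mat D D"
    using Suc by (intro Suc.IH) (auto simp: drop_cfg_def)
  moreover have "A (i 0) \<in> carrier_mat D D"
    using Suc.prems by (simp add: tensor_def)
  ultimately show ?case
    by (simp add: word_prod_Suc)
qed simp

lemma word_prod_carrier_configs:
  "tensor d D A \<Longrightarrow> i \<in> configs d l \<Longrightarrow> word_prod D A l i \<in> carrier_mat D D"
  by (rule word_prod_carrier) (auto simp: configs_def)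

lemma word_prod_cong:
  "(\<And>n. n < l \<Longrightarrow> i n = i' n) \<Longrightarrow> word_prod D A l i = word_prod D A l i'"
proof (induction l arbitrary: i i')
  case (Suc l)
  have "word_prod D A l (drop_cfg 1 i) = word_prod D A l (drop_cfg 1 i')"
    by (rule Suc.IH) (simp add: drop_cfg_def Suc.prems)
  with Suc.prems show ?case
    by (simp add: word_prod_Suc)
qed simp

lemma word_prod_append:
  assumes "tensor d D A" and "\<And>n. n < a + b \<Longrightarrow> i n < d"
  shows "word_prod D A (a + b) i = word_prod D A a i * word_prod D A b (drop_cfg a i)"
  using assms(2)
proof (induction a arbitrary: i)
  case 0
  have "drop_cfg 0 i = i"
    by (simp add: drop_cfg_def)
  with word_prod_carrier[OF assms(1), of b i] 0 show ?case
    by simp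
next
  case (Suc a)
  have carrier: "A (i 0) \<in> carrier_mat D D" "word_prod D A a (drop_cfg 1 i) \<in> carrier_mat D D"
    "word_prod D A b (drop_cfg (Suc a) i) \<in> carrier_mat D D"
    using assms(1) Suc.prems by (auto simp: tensor_def drop_cfg_def intro!: word_prod_carrier)
  have "word_prod D A (Suc a + b) i = A (i 0) * word_prod D A (a + b) (drop_cfg 1 i)"
    by (simp add: word_prod_Suc)
  also have "\<dots> = A (i 0) * (word_prod D A a (drop_cfg 1 i) * word_prod D A b (drop_cfg (Suc a) i))"
    using Suc.IH[of "drop_cfg 1 i"] Suc.prems by (simp add: drop_cfg_def drop_cfg_drop_cfg)
  also have "\<dots> = word_prod D A (Suc a) i * word_prod D A b (drop_cfg (Suc a) i)"
    using carrier by (simp add: word_prod_Suc assoc_mult_mat[of _ D D _ D _ D])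
  finally show ?case .
qed

lemma word_prod_append_configs:
  assumes "tensor d D A" and "i \<in> configs d (a + b)"
  shows "word_prod D A (a + b) i = word_prod D A a (take_cfg a i) * word_prod D A b (drop_cfg a i)"
proof -
  have "word_prod D A a i = word_prod D A a (take_cfg a i)"
    by (rule word_prod_cong) (simp add: take_cfg_def)
  with word_prod_append[OF assms(1)] assms(2) show ?thesis
    by (simp add: configs_def)
qed

lemma index_mult_mat_sum:
  "A \<in> carrier_mat nr n \<Longrightarrow> B \<in> carrier_mat n nc \<Longrightarrow> i < nr \<Longrightarrow> j < nc \<Longrightarrow>
    (A * B) $$ (i, j) = (\<Sum>k<n. A $$ (i, k) * B $$ (k, j))"
  by (auto simp: scalar_prod_def atLeast0LessThan intro!: sum.cong)

definition word_comb ::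
    "nat \<Rightarrow> nat \<Rightarrow> (nat \<Rightarrow> complex mat) \<Rightarrow> ((nat \<Rightarrow> nat) \<Rightarrow> complex) \<Rightarrow> nat \<Rightarrow> complex mat" where
  "word_comb d D A c l = mat D D (\<lambda>e. \<Sum>x\<in>configs d l. c x * word_prod D A l x $$ e)"

lemma word_comb_carrier [simp]: "word_comb d D A c l \<in> carrier_mat D D"
  and dim_row_word_comb [simp]: "dim_row (word_comb d D A c l) = D"
  and dim_col_word_comb [simp]: "dim_col (word_comb d D A c l) = D"
  by (simp_all add: word_comb_def)

lemma word_comb_cong:
  "(\<And>x. x \<in> configs d l \<Longrightarrow> c x = c' x) \<Longrightarrow> word_comb d D A c l = word_comb d D A c' l"
  unfolding word_comb_def by (intro cong_mat refl sum.cong) auto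

lemma word_comb_append:
  assumes T: "tensor d D A"
  shows "word_comb d D A (\<lambda>i. f (take_cfg a i) * g (drop_cfg a i)) (a + b)
    = word_comb d D A f a * word_comb d D A g b"
proof (rule eq_matI)
  fix p q assume "p < dim_row (word_comb d D A f a * word_comb d D A g b)"
    and "q < dim_col (word_comb d D A f a * word_comb d D A g b)"
  then have p: "p < D" and q: "q < D"
    by auto
  let ?W = "word_prod D A"
  define F where "F = (\<lambda>(x, y). f x * g y * (\<Sum>t<D. ?W a x $$ (p, t) * ?W b y $$ (t, q)))"
  have "word_comb d D A (\<lambda>i. f (take_cfg a i) * g (drop_cfg a i)) (a + b) $$ (p, q)
      = (\<Sum>i\<in>configs d (a + b). f (take_cfg a i) * g (drop_cfg a i) * ?W (a + b) i $$ (p, q))"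
    using p q by (simp add: word_comb_def)
  also have "\<dots> = (\<Sum>i\<in>configs d (a + b). F (take_cfg a i, drop_cfg a i))"
  proof (rule sum.cong[OF refl])
    fix i assume i: "i \<in> configs d (a + b)"
    show "f (take_cfg a i) * g (drop_cfg a i) * ?W (a + b) i $$ (p, q) = F (take_cfg a i, drop_cfg a i)"
      using p q word_prod_append_configs[OF T i]
        word_prod_carrier_configs[OF T take_cfg_in_configs[OF i]]
        word_prod_carrier_configs[OF T drop_cfg_in_configs[OF i]]
      by (simp add: F_def index_mult_mat_sum del: index_mult_mat(1))
  qed
  also have "\<dots> = (\<Sum>x\<in>configs d a. \<Sum>y\<in>configs d b. F (x, y))"
    using sum.reindex_bij_betw[OF bij_betw_configs_append, of F]
    by (simp add: sum.cartesian_product)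
  also have "\<dots> = (\<Sum>t<D. (\<Sum>x\<in>configs d a. f x * ?W a x $$ (p, t))
                        * (\<Sum>y\<in>configs d b. g y * ?W b y $$ (t, q)))"
    unfolding F_def
    by (simp add: sum_product sum_distrib_left ac_simps sum.swap[of _ "{..<D}"])
       (rule sum.cong[OF refl], rule sum.swap)
  also have "\<dots> = (word_comb d D A f a * word_comb d D A g b) $$ (p, q)"
    using p q by (subst index_mult_mat_sum) (auto simp: word_comb_def)
  finally show "word_comb d D A (\<lambda>i. f (take_cfg a i) * g (drop_cfg a i)) (a + b) $$ (p, q)
      = (word_comb d D A f a * word_comb d D A g b) $$ (p, q)" .
qed auto

lemma word_comb_append_take:
  assumes T: "tensor d D A"
  shows "word_comb d D A (\<lambda>i. f (take_cfg a i) * g (take_cfg b (drop_cfg a i))) (a + b)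
    = word_comb d D A f a * word_comb d D A g b"
proof -
  have "word_comb d D A (\<lambda>i. f (take_cfg a i) * g (take_cfg b (drop_cfg a i))) (a + b)
      = word_comb d D A (\<lambda>i. f (take_cfg a i) * g (drop_cfg a i)) (a + b)"
  proof (rule word_comb_cong)
    fix i assume "i \<in> configs d (a + b)"
    then have "take_cfg b (drop_cfg a i) = drop_cfg a i"
      by (auto simp: configs_def take_cfg_def drop_cfg_def fun_eq_iff)
    then show "f (take_cfg a i) * g (take_cfg b (drop_cfg a i)) = f (take_cfg a i) * g (drop_cfg a i)"
      by simp
  qed
  then show ?thesis
    using word_comb_append[OF T] by simp
qed

lemma mtrace_word_comb:
  assumes "tensor d D A"
  shows "mtrace (word_comb d D A c l) = (\<Sum>x\<in>configs d l. c x * ti_mps D A l x)"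
proof -
  have "mtrace (word_comb d D A c l) = (\<Sum>k<D. \<Sum>x\<in>configs d l. c x * word_prod D A l x $$ (k, k))"
    by (simp add: mtrace_def word_comb_def)
  also have "\<dots> = (\<Sum>x\<in>configs d l. c x * ti_mps D A l x)"
    using word_prod_carrier_configs[OF assms, THEN carrier_matD(1), of _ l]
    by (subst sum.swap) (auto simp: ti_mps_def mtrace_def sum_distrib_left intro!: sum.cong)
  finally show ?thesis .
qed

section \<open>Matrix units\<close>

definition mat_unit :: "nat \<Rightarrow> nat \<Rightarrow> nat \<Rightarrow> 'a :: zero_neq_one mat" where
  "mat_unit D p q = mat D D (\<lambda>(i, j). if i = p \<and> j = q then 1 else 0)"

lemma mat_unit_carrier [simp]: "mat_unit D p q \<in> carrier_mat D D"
  and dim_row_mat_unit [simp]: "dim_row (mat_unit D p q) = D"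
  and dim_col_mat_unit [simp]: "dim_col (mat_unit D p q) = D"
  by (simp_all add: mat_unit_def)

lemma index_mat_unit [simp]:
  "i < D \<Longrightarrow> j < D \<Longrightarrow> mat_unit D p q $$ (i, j) = (if i = p \<and> j = q then 1 else 0)"
  by (simp add: mat_unit_def)

lemma index_mat_unit_pair:
  "e \<in> {..<D} \<times> {..<D} \<Longrightarrow> mat_unit D p q $$ e = (if e = (p, q) then 1 else 0)"
  by (auto split: if_split_asm)

lemma one_smult_mat [simp]: "1 \<cdot>\<^sub>m (M :: 'a :: semiring_1 mat) = M"
  by (rule eq_matI) auto

lemma index_mat_unit_mult:
  fixes B :: "'a :: semiring_1 mat"
  assumes "B \<in> carrier_mat D D" "r < D" "i < D" "k < D"
  shows "(mat_unit D p r * B) $$ (i, k) = (if i = p then B $$ (r, k) else 0)"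
proof -
  have "(mat_unit D p r * B) $$ (i, k) = (\<Sum>t<D. mat_unit D p r $$ (i, t) * B $$ (t, k))"
    using assms by (intro index_mult_mat_sum) auto
  also have "\<dots> = (\<Sum>t<D. if t = r then (if i = p then B $$ (r, k) else 0) else 0)"
    using assms by (intro sum.cong) auto
  finally show ?thesis
    using assms by simp
qed

lemma mat_unit_mult_mult_mat_unit:
  fixes B :: "'a :: semiring_1 mat"
  assumes B: "B \<in> carrier_mat D D" and "r < D" "p' < D"
  shows "mat_unit D p r * B * mat_unit D p' r' = B $$ (r, p') \<cdot>\<^sub>m mat_unit D p r'"
proof (rule eq_matI)
  fix i j assume "i < dim_row (B $$ (r, p') \<cdot>\<^sub>m mat_unit D p r')"
    and "j < dim_col (B $$ (r, p') \<cdot>\<^sub>m mat_unit D p r')"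
  then have i: "i < D" and j: "j < D"
    by auto
  have "(mat_unit D p r * B * mat_unit D p' r') $$ (i, j)
      = (\<Sum>k<D. (mat_unit D p r * B) $$ (i, k) * mat_unit D p' r' $$ (k, j))"
    using B i j by (intro index_mult_mat_sum) auto
  also have "\<dots> = (\<Sum>k<D. if i = p \<and> j = r' \<and> k = p' then B $$ (r, k) else 0)"
    using assms i j by (intro sum.cong refl) (simp add: index_mat_unit_mult del: index_mult_mat(1))
  also have "\<dots> = (B $$ (r, p') \<cdot>\<^sub>m mat_unit D p r') $$ (i, j)"
    using assms i j by (cases "i = p \<and> j = r'") (auto simp: sum.delta')
  finally show "(mat_unit D p r * B * mat_unit D p' r') $$ (i, j)
      = (B $$ (r, p') \<cdot>\<^sub>m mat_unit D p r') $$ (i, j)" .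
qed auto

fun mat_prod :: "nat \<Rightarrow> nat \<Rightarrow> (nat \<Rightarrow> 'a :: semiring_1 mat) \<Rightarrow> 'a mat" where
  "mat_prod D 0 F = 1\<^sub>m D"
| "mat_prod D (Suc n) F = F 0 * mat_prod D n (\<lambda>j. F (Suc j))"

lemma mat_prod_cong: "(\<And>j. j < n \<Longrightarrow> F j = G j) \<Longrightarrow> mat_prod D n F = mat_prod D n G"
proof (induction n arbitrary: F G)
  case (Suc n)
  have "mat_prod D n (\<lambda>j. F (Suc j)) = mat_prod D n (\<lambda>j. G (Suc j))"
    by (rule Suc.IH) (simp add: Suc.prems)
  moreover have "F 0 = G 0"
    by (rule Suc.prems) simp
  ultimately show ?case
    by simp
qed simp

lemma mat_prod_mat_unit_chain:
  fixes B :: "nat \<Rightarrow> 'a :: comm_semiring_1 mat"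
  assumes "\<And>j. j \<le> m \<Longrightarrow> P j < D" "\<And>j. j \<le> m \<Longrightarrow> R j < D"
    and "\<And>j. j \<le> m \<Longrightarrow> B j \<in> carrier_mat D D"
  shows "mat_prod D (Suc m) (\<lambda>j. mat_unit D (P j) (R j) * B j)
       = (\<Prod>j<m. B j $$ (R j, P (Suc j))) \<cdot>\<^sub>m (mat_unit D (P 0) (R m) * B m)"
  using assms
proof (induction m arbitrary: P R B)
  case 0
  then have "mat_unit D (P 0) (R 0) * B 0 \<in> carrier_mat D D"
    by auto
  then show ?case
    by (simp add: right_mult_one_mat)
next
  case (Suc m)
  define c where "c = (\<Prod>j<m. B (Suc j) $$ (R (Suc j), P (Suc (Suc j))))"
  define X where "X = mat_unit D (P 0) (R 0) * B 0"
  define Y where "Y = mat_unit D (P 1) (R (Suc m)) * B (Suc m)"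
  have B: "B 0 \<in> carrier_mat D D" "B (Suc m) \<in> carrier_mat D D"
    and RP: "R 0 < D" "P 1 < D"
    using Suc.prems by auto
  then have X: "X \<in> carrier_mat D D" and Y: "Y \<in> carrier_mat D D"
    by (auto simp: X_def Y_def intro!: mult_carrier_mat)
  have "mat_prod D (Suc m) (\<lambda>j. mat_unit D (P (Suc j)) (R (Suc j)) * B (Suc j)) = c \<cdot>\<^sub>m Y"
    using Suc.IH[of "\<lambda>j. P (Suc j)" "\<lambda>j. R (Suc j)" "\<lambda>j. B (Suc j)"] Suc.prems
    by (simp add: c_def Y_def)
  then have "mat_prod D (Suc (Suc m)) (\<lambda>j. mat_unit D (P j) (R j) * B j) = X * (c \<cdot>\<^sub>m Y)"
    by (simp add: X_def)
  also have "\<dots> = c \<cdot>\<^sub>m (X * Y)"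
    by (rule mult_smult_distrib[OF X Y])
  also have "X * Y = X * mat_unit D (P 1) (R (Suc m)) * B (Suc m)"
    unfolding Y_def by (rule assoc_mult_mat[OF X mat_unit_carrier B(2), symmetric])
  also have "X * mat_unit D (P 1) (R (Suc m)) = B 0 $$ (R 0, P 1) \<cdot>\<^sub>m mat_unit D (P 0) (R (Suc m))"
    unfolding X_def using B(1) RP by (rule mat_unit_mult_mult_mat_unit)
  also have "c \<cdot>\<^sub>m ((B 0 $$ (R 0, P 1) \<cdot>\<^sub>m mat_unit D (P 0) (R (Suc m))) * B (Suc m))
      = (B 0 $$ (R 0, P 1) * c) \<cdot>\<^sub>m (mat_unit D (P 0) (R (Suc m)) * B (Suc m))"
    using B by (simp add: mult_smult_assoc_mat[OF mat_unit_carrier B(2)])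
      (rule eq_matI; simp add: ac_simps)
  also have "B 0 $$ (R 0, P 1) * c = (\<Prod>j<Suc m. B j $$ (R j, P (Suc j)))"
    unfolding c_def by (simp only: prod.lessThan_Suc_shift One_nat_def)
  finally show ?case .
qed

lemma mtrace_mat_prod_mat_unit_chain:
  assumes "\<And>j. j \<le> m \<Longrightarrow> P j < D" "\<And>j. j \<le> m \<Longrightarrow> R j < D"
    and "\<And>j. j \<le> m \<Longrightarrow> B j \<in> carrier_mat D D"
  shows "mtrace (mat_prod D (Suc m) (\<lambda>j. mat_unit D (P j) (R j) * B j))
       = (\<Prod>j<m. B j $$ (R j, P (Suc j))) * B m $$ (R m, P 0)"
proof -
  have "B m \<in> carrier_mat D D" "R m < D" "P 0 < D"
    using assms by auto
  then have "mtrace (c \<cdot>\<^sub>m (mat_unit D (P 0) (R m) * B m))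
      = (\<Sum>k<D. c * (if k = P 0 then B m $$ (R m, k) else 0))" for c
    by (auto simp: mtrace_def index_mat_unit_mult simp del: index_mult_mat(1) intro!: sum.cong)
  with \<open>P 0 < D\<close> show ?thesis
    by (simp only: mat_prod_mat_unit_chain[OF assms]) (simp add: if_distrib cong: if_cong)
qed

lemma mtrace_mult:
  assumes "X \<in> carrier_mat D D" and "M \<in> carrier_mat D D"
  shows "mtrace (X * M) = (\<Sum>i<D. \<Sum>j<D. X $$ (i, j) * M $$ (j, i))"
  using assms by (simp add: mtrace_def index_mult_mat_sum del: index_mult_mat(1))

lemma mtrace_smult: "M \<in> carrier_mat D D \<Longrightarrow> mtrace (c \<cdot>\<^sub>m M) = c * mtrace M"
  unfolding mtrace_def by (auto simp: sum_distrib_left intro!: sum.cong)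

lemma mtrace_mat_unit_mult:
  assumes "M \<in> carrier_mat D D" and "p < D" and "q < D"
  shows "mtrace (mat_unit D p q * M) = M $$ (q, p)"
  using assms
  by (simp add: mtrace_def index_mat_unit_mult if_distrib cong: if_cong del: index_mult_mat(1))

section \<open>Biorthogonal systems\<close>

definition scale_fun :: "'a :: times \<Rightarrow> ('x \<Rightarrow> 'a) \<Rightarrow> 'x \<Rightarrow> 'a" where
  "scale_fun c f = (\<lambda>x. c * f x)"

lemma vector_space_scale_fun: "vector_space (scale_fun :: 'a :: field \<Rightarrow> ('x \<Rightarrow> 'a) \<Rightarrow> _)"
  by unfold_locales (auto simp: scale_fun_def fun_eq_iff algebra_simps)

lemma sum_fun_apply: "(\<Sum>b\<in>I. f b) x = (\<Sum>b\<in>I. f b x :: 'a :: comm_monoid_add)"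
  by (induction I rule: infinite_finite_induct) auto

lemma span_deltas:
  fixes f :: "nat \<Rightarrow> 'a :: field"
  assumes "\<And>k. D \<le> k \<Longrightarrow> f k = 0"
  shows "f \<in> module.span scale_fun ((\<lambda>k k'. if k' = k then 1 else 0) ` {..<D})"
proof -
  interpret V: vector_space "scale_fun :: 'a \<Rightarrow> (nat \<Rightarrow> 'a) \<Rightarrow> _"
    by (rule vector_space_scale_fun)
  have "f = (\<Sum>k<D. scale_fun (f k) (\<lambda>k'. if k' = k then 1 else 0))"
    using assms by (auto simp: fun_eq_iff sum_fun_apply scale_fun_def if_distrib not_less cong: if_cong)
  also have "\<dots> \<in> V.span ((\<lambda>k k'. if k' = k then 1 else 0) ` {..<D})"
    by (intro V.span_sum V.span_scale V.span_base) auto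
  finally show ?thesis .
qed

text \<open>The rows \<open>P a\<close>, cut off at \<open>D\<close>, are linearly independent.\<close>

lemma card_le_if_biorthogonal:
  fixes P :: "'i \<Rightarrow> nat \<Rightarrow> 'a :: field" and Q :: "nat \<Rightarrow> 'i \<Rightarrow> 'a"
  assumes I: "finite I"
    and biorth: "\<And>a b. a \<in> I \<Longrightarrow> b \<in> I \<Longrightarrow> (\<Sum>k<D. P a k * Q k b) = (if a = b then 1 else 0)"
  shows "card I \<le> D"
proof -
  interpret V: vector_space "scale_fun :: 'a \<Rightarrow> (nat \<Rightarrow> 'a) \<Rightarrow> _"
    by (rule vector_space_scale_fun)
  define p where "p = (\<lambda>a k. if k < D then P a k else 0)"
  define \<delta> :: "nat \<Rightarrow> nat \<Rightarrow> 'a" where "\<delta> = (\<lambda>k k'. if k' = k then 1 else 0)"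
  have p_biorth: "(\<Sum>k<D. p a k * Q k b) = (if a = b then 1 else 0)" if "a \<in> I" "b \<in> I" for a b
    using biorth[OF that] by (simp add: p_def)
  have inj: "inj_on p I"
  proof (rule inj_onI)
    fix a b assume a: "a \<in> I" and b: "b \<in> I" and "p a = p b"
    then have "(\<Sum>k<D. p b k * Q k a) = 1"
      using p_biorth[OF a a] by simp
    then show "a = b"
      using p_biorth[OF b a] by (auto split: if_splits)
  qed
  have span: "p ` I \<subseteq> V.span (\<delta> ` {..<D})"
    unfolding p_def \<delta>_def by (auto intro!: span_deltas)
  have "V.independent (p ` I)"
  proof (rule V.independent_if_scalars_zero)
    fix f x assume zero: "(\<Sum>v\<in>p ` I. scale_fun (f v) v) = 0" and "x \<in> p ` I"
    then obtain a where a: "a \<in> I" and x: "x = p a"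
      by auto
    have "0 = (\<Sum>k<D. (\<Sum>b\<in>I. scale_fun (f (p b)) (p b)) k * Q k a)"
      using zero sum.reindex[OF inj, of "\<lambda>v. scale_fun (f v) v"] by simp
    also have "\<dots> = (\<Sum>b\<in>I. f (p b) * (\<Sum>k<D. p b k * Q k a))"
      by (simp add: sum_fun_apply scale_fun_def sum_distrib_left sum_distrib_right
          sum.swap[of _ "{..<D}"] ac_simps)
    also have "\<dots> = f (p a)"
      using p_biorth a I by (simp add: if_distrib[of "(*) _"] cong: if_cong)
    finally show "f x = 0"
      using x by simp
  qed (use I in simp)
  then have "card (p ` I) \<le> card (\<delta> ` {..<D})"
    using V.independent_span_bound[OF _ _ span] by simp
  then show ?thesis
    using card_image[OF inj] card_image_le[of "{..<D}" \<delta>] by simp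
qed

lemma biorthogonal_functional_exists:
  fixes F :: "('x \<Rightarrow> 'a :: field) set"
  assumes C: "finite C" and indep: "\<not> module.dependent scale_fun F"
    and supp: "\<And>f x. f \<in> F \<Longrightarrow> x \<notin> C \<Longrightarrow> f x = 0" and f0: "f0 \<in> F"
  shows "\<exists>\<gamma>. \<forall>f\<in>F. (\<Sum>x\<in>C. \<gamma> x * f x) = (if f = f0 then 1 else 0)"
proof -
  interpret V: vector_space_pair "scale_fun :: 'a \<Rightarrow> ('x \<Rightarrow> 'a) \<Rightarrow> _" "(*) :: 'a \<Rightarrow> 'a \<Rightarrow> 'a"
    by (intro vector_space_pair.intro vector_space_scale_fun) (unfold_locales, auto simp: algebra_simps)
  obtain g where lin: "Vector_Spaces.linear scale_fun (*) g"
    and g: "\<And>f. f \<in> F \<Longrightarrow> g f = (if f = f0 then 1 else 0)"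
    using V.linear_independent_extend[OF indep, of "\<lambda>f. if f = f0 then 1 else 0"] by blast
  interpret g: module_hom scale_fun "(*)" g
    using lin by (simp add: module_hom_iff_linear)
  define \<delta> :: "'x \<Rightarrow> 'x \<Rightarrow> 'a" where "\<delta> = (\<lambda>x y. if y = x then 1 else 0)"
  show ?thesis
  proof (intro exI[of _ "\<lambda>x. g (\<delta> x)"] ballI)
    fix f assume f: "f \<in> F"
    have "f = (\<Sum>x\<in>C. scale_fun (f x) (\<delta> x))"
    proof
      fix y
      have "(\<Sum>x\<in>C. scale_fun (f x) (\<delta> x)) y = (\<Sum>x\<in>C. if x = y then f y else 0)"
        by (auto simp: sum_fun_apply scale_fun_def \<delta>_def intro!: sum.cong)
      also have "\<dots> = f y"
        using supp[OF f, of y] C by simp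
      finally show "f y = (\<Sum>x\<in>C. scale_fun (f x) (\<delta> x)) y" ..
    qed
    then have "g f = (\<Sum>x\<in>C. f x * g (\<delta> x))"
      by (metis (no_types, lifting) g.scale g.sum sum.cong)
    then show "(\<Sum>x\<in>C. g (\<delta> x) * f x) = (if f = f0 then 1 else 0)"
      using g[OF f] by (simp add: ac_simps)
  qed
qed

section \<open>Injective blocks\<close>

text \<open>Extended by \<open>0\<close> outside \<open>configs d l\<close>, so that entry functions are finitely supported.\<close>

definition entry_fun :: "nat \<Rightarrow> nat \<Rightarrow> (nat \<Rightarrow> complex mat) \<Rightarrow> nat \<Rightarrow> nat \<times> nat \<Rightarrow> (nat \<Rightarrow> nat) \<Rightarrow> complex" where
  "entry_fun d D A l e = (\<lambda>x. if x \<in> configs d l then word_prod D A l x $$ e else 0)"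

text \<open>A vanishing combination \<open>coef\<close> of the entries of the words is the trace pairing of the
  words with the matrix \<open>coef\<^sup>T\<close>.\<close>

lemma injective_block_entry_coeffs_zero:
  assumes T: "tensor d D A" and inj: "injective_block d D A l"
    and zero: "\<And>x. x \<in> configs d l \<Longrightarrow> (\<Sum>e\<in>{..<D} \<times> {..<D}. coef e * word_prod D A l x $$ e) = 0"
    and e: "e \<in> {..<D} \<times> {..<D}"
  shows "coef e = 0"
proof -
  define X where "X = mat D D (\<lambda>(i, j). coef (j, i))"
  have X: "X \<in> carrier_mat D D"
    by (simp add: X_def)
  have "mtrace (X * word_prod D A l w) = mtrace (0\<^sub>m D D * word_prod D A l w)"
    if w: "w \<in> configs d l" for w
  proof -
    have W: "word_prod D A l w \<in> carrier_mat D D"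
      by (rule word_prod_carrier_configs[OF T w])
    have "mtrace (X * word_prod D A l w) = (\<Sum>i<D. \<Sum>j<D. coef (j, i) * word_prod D A l w $$ (j, i))"
      using mtrace_mult[OF X W] by (simp add: X_def)
    also have "\<dots> = (\<Sum>e\<in>{..<D} \<times> {..<D}. coef e * word_prod D A l w $$ e)"
      by (subst sum.swap, subst sum.cartesian_product, rule sum.cong) auto
    also have "\<dots> = mtrace (0\<^sub>m D D * word_prod D A l w)"
      using zero[OF w] mtrace_mult[OF zero_carrier_mat W] by simp
    finally show ?thesis .
  qed
  then have "X = 0\<^sub>m D D"
    using inj X unfolding injective_block_def
    by (intro inj_onD[where f = "\<lambda>X. \<lambda>w\<in>configs d l. mtrace (X * word_prod D A l w)"]
        restrict_ext) auto
  obtain i j where ij: "e = (i, j)" "i < D" "j < D"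
    using e by auto
  then have "coef e = X $$ (j, i)"
    by (simp add: X_def)
  also have "\<dots> = 0"
    using \<open>X = 0\<^sub>m D D\<close> ij by simp
  finally show ?thesis .
qed

lemma inj_on_entry_fun:
  assumes T: "tensor d D A" and inj: "injective_block d D A l"
  shows "inj_on (entry_fun d D A l) ({..<D} \<times> {..<D})"
proof (rule inj_onI, rule ccontr)
  fix e1 e2 assume e1: "e1 \<in> {..<D} \<times> {..<D}" and e2: "e2 \<in> {..<D} \<times> {..<D}"
    and eq: "entry_fun d D A l e1 = entry_fun d D A l e2" and "e1 \<noteq> e2"
  define coef where "coef = (\<lambda>e. if e = e1 then (1 :: complex) else if e = e2 then -1 else 0)"
  have "coef e1 = 0"
  proof (rule injective_block_entry_coeffs_zero[OF T inj _ e1])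
    fix x assume x: "x \<in> configs d l"
    then have "word_prod D A l x $$ e1 = word_prod D A l x $$ e2"
      using fun_cong[OF eq, of x] by (simp add: entry_fun_def)
    then show "(\<Sum>e\<in>{..<D} \<times> {..<D}. coef e * word_prod D A l x $$ e) = 0"
      using e1 e2 \<open>e1 \<noteq> e2\<close>
      by (simp add: coef_def if_distrib[of "\<lambda>c. c * _"] sum.If_cases Int_absorb1 cong: if_cong)
  qed
  then show False
    by (simp add: coef_def)
qed

lemma independent_entry_funs:
  assumes T: "tensor d D A" and inj: "injective_block d D A l"
  shows "\<not> module.dependent scale_fun (entry_fun d D A l ` ({..<D} \<times> {..<D}))"
proof -
  let ?B = "{..<D} \<times> {..<D}" and ?\<phi> = "entry_fun d D A l"
  interpret V: vector_space "scale_fun :: complex \<Rightarrow> ((nat \<Rightarrow> nat) \<Rightarrow> complex) \<Rightarrow> _"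
    by (rule vector_space_scale_fun)
  show ?thesis
  proof (rule V.independent_if_scalars_zero)
    fix f v assume zero: "(\<Sum>v\<in>?\<phi> ` ?B. scale_fun (f v) v) = 0" and "v \<in> ?\<phi> ` ?B"
    then obtain e where e: "e \<in> ?B" and v: "v = ?\<phi> e"
      by auto
    have zero': "(\<Sum>e\<in>?B. scale_fun (f (?\<phi> e)) (?\<phi> e)) = 0"
      using zero sum.reindex[OF inj_on_entry_fun[OF T inj], of "\<lambda>v. scale_fun (f v) v"] by simp
    have "f (?\<phi> e) = 0"
    proof (rule injective_block_entry_coeffs_zero[OF T inj _ e])
      fix x assume "x \<in> configs d l"
      then show "(\<Sum>e\<in>?B. f (?\<phi> e) * word_prod D A l x $$ e) = 0"
        using fun_cong[OF zero', of x] by (simp add: sum_fun_apply scale_fun_def entry_fun_def)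
    qed
    then show "f v = 0"
      using v by simp
  qed simp
qed

definition separated_entries :: "nat \<Rightarrow> nat \<Rightarrow> (nat \<Rightarrow> complex mat) \<Rightarrow> nat \<Rightarrow> (nat \<times> nat) set \<Rightarrow> bool" where
  "separated_entries d D A l T \<longleftrightarrow> T \<subseteq> {..<D} \<times> {..<D} \<and>
     (\<exists>c. \<forall>t\<in>T. \<forall>e\<in>T. word_comb d D A (c t) l $$ e = (if e = t then 1 else 0))"

lemma separated_entries_if_independent:
  assumes T: "T \<subseteq> {..<D} \<times> {..<D}" and inj: "inj_on (entry_fun d D A l) T"
    and indep: "\<not> module.dependent scale_fun (entry_fun d D A l ` T)"
  shows "separated_entries d D A l T"
proof -
  have "\<exists>c. \<forall>e\<in>T. word_comb d D A c l $$ e = (if e = t then 1 else 0)" if t: "t \<in> T" for t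
  proof -
    obtain c where c: "\<And>f. f \<in> entry_fun d D A l ` T \<Longrightarrow>
        (\<Sum>x\<in>configs d l. c x * f x) = (if f = entry_fun d D A l t then 1 else 0)"
      using biorthogonal_functional_exists[OF finite_configs indep _ imageI[OF t]]
      by (force simp: entry_fun_def)
    have "word_comb d D A c l $$ e = (if e = t then 1 else 0)" if e: "e \<in> T" for e
    proof -
      have "word_comb d D A c l $$ e = (\<Sum>x\<in>configs d l. c x * entry_fun d D A l e x)"
        using e T by (cases e) (auto simp: word_comb_def entry_fun_def intro!: sum.cong)
      also have "\<dots> = (if e = t then 1 else 0)"
        using c[OF imageI[OF e]] inj_onD[OF inj _ e t] by auto
      finally show ?thesis .
    qed
    then show ?thesis
      by blast
  qed
  then show ?thesis
    unfolding separated_entries_def using T by (metis bchoice)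
qed

lemma separated_entries_if_injective_block:
  assumes "tensor d D A" and "injective_block d D A l"
  shows "separated_entries d D A l ({..<D} \<times> {..<D})"
  using inj_on_entry_fun[OF assms] independent_entry_funs[OF assms]
  by (intro separated_entries_if_independent) auto

lemma mat_units_word_combs:
  assumes "tensor d D A" and "injective_block d D A l"
  shows "\<exists>c. \<forall>e\<in>{..<D} \<times> {..<D}. word_comb d D A (c e) l = mat_unit D (fst e) (snd e)"
proof -
  obtain c where c: "\<And>t e. t \<in> {..<D} \<times> {..<D} \<Longrightarrow> e \<in> {..<D} \<times> {..<D} \<Longrightarrow>
      word_comb d D A (c t) l $$ e = (if e = t then 1 else 0)"
    using separated_entries_if_injective_block[OF assms] unfolding separated_entries_def by blast
  have "word_comb d D A (c t) l = mat_unit D (fst t) (snd t)" if "t \<in> {..<D} \<times> {..<D}" for t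
    using c[OF that] by (intro eq_matI) auto
  then show ?thesis
    by blast
qed

lemma smult_mult_smult_mat:
  assumes "X \<in> carrier_mat nr n" and "Y \<in> carrier_mat n nc"
  shows "(a \<cdot>\<^sub>m X) * (b \<cdot>\<^sub>m Y) = (a * b :: 'a :: comm_semiring_0) \<cdot>\<^sub>m (X * Y)"
  using assms by (intro eq_matI) (auto simp: ac_simps)

lemma word_prod_proportional_power:
  assumes T: "tensor d D A" and M: "M \<in> carrier_mat D D"
    and proportional: "\<And>y. y \<in> configs d l \<Longrightarrow> \<exists>c. word_prod D A l y = c \<cdot>\<^sub>m M"
  shows "w \<in> configs d (l * k) \<Longrightarrow> \<exists>c. word_prod D A (l * k) w = c \<cdot>\<^sub>m M ^\<^sub>m k"
proof (induction k arbitrary: w)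
  case 0
  have "word_prod D A (l * 0) w = 1 \<cdot>\<^sub>m M ^\<^sub>m 0"
    using M by simp
  then show ?case ..
next
  case (Suc k)
  have w: "w \<in> configs d (l * k + l)"
    using Suc.prems by (simp add: ac_simps)
  obtain c1 where c1: "word_prod D A (l * k) (take_cfg (l * k) w) = c1 \<cdot>\<^sub>m M ^\<^sub>m k"
    using Suc.IH[OF take_cfg_in_configs[OF w]] by blast
  obtain c2 where c2: "word_prod D A l (drop_cfg (l * k) w) = c2 \<cdot>\<^sub>m M"
    using proportional[OF drop_cfg_in_configs[OF w]] by blast
  have "word_prod D A (l * k + l) w = (c1 * c2) \<cdot>\<^sub>m (M ^\<^sub>m k * M)"
    unfolding word_prod_append_configs[OF T w] c1 c2
    by (rule smult_mult_smult_mat[OF pow_carrier_mat[OF M] M])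
  then show ?case
    by (auto simp: ac_simps)
qed

text \<open>The map of \<open>injective_block\<close> then factors through the linear form \<open>X \<mapsto> tr (X M)\<close>,
  which has a kernel once \<open>D \<ge> 2\<close>.\<close>

lemma not_injective_block_if_proportional:
  assumes T: "tensor d D A" and D2: "2 \<le> D" and M: "M \<in> carrier_mat D D"
    and proportional: "\<And>w. w \<in> configs d l \<Longrightarrow> \<exists>c. word_prod D A l w = c \<cdot>\<^sub>m M"
  shows "\<not> injective_block d D A l"
proof
  assume inj: "injective_block d D A l"
  have eq: "X = Y" if X: "X \<in> carrier_mat D D" and Y: "Y \<in> carrier_mat D D"
    and tr: "mtrace (X * M) = mtrace (Y * M)" for X Y
  proof -
    have "mtrace (Z * word_prod D A l w) = c * mtrace (Z * M)"
      if "Z \<in> carrier_mat D D" and "word_prod D A l w = c \<cdot>\<^sub>m M" for Z w c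
      using that M by (simp add: mult_smult_distrib mtrace_smult[of _ D])
    then have "(\<lambda>w\<in>configs d l. mtrace (X * word_prod D A l w))
        = (\<lambda>w\<in>configs d l. mtrace (Y * word_prod D A l w))"
      using proportional X Y tr by (intro restrict_ext) metis
    then show "X = Y"
      using inj X Y unfolding injective_block_def by (auto dest: inj_onD)
  qed
  have tr_unit: "mtrace (a \<cdot>\<^sub>m mat_unit D p q * M) = a * M $$ (q, p)" if "p < D" "q < D" for a p q
    using that M
    by (simp add: mult_smult_assoc_mat[OF mat_unit_carrier M]
        mtrace_smult[OF mult_carrier_mat[OF mat_unit_carrier M]] mtrace_mat_unit_mult)
  have "M $$ (1, 0) \<cdot>\<^sub>m mat_unit D 0 0 = M $$ (0, 0) \<cdot>\<^sub>m mat_unit D 0 1"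
    using D2 by (intro eq) (simp_all add: tr_unit mult.commute)
  then have "(M $$ (1, 0) \<cdot>\<^sub>m mat_unit D 0 0) $$ (0, 1) = (M $$ (0, 0) \<cdot>\<^sub>m mat_unit D 0 1) $$ (0, 1)"
    by (rule arg_cong[where f = "\<lambda>X. X $$ (0, 1)"])
  then have "M $$ (0, 0) = 0"
    using D2 by simp
  then have "1 \<cdot>\<^sub>m mat_unit D 0 0 = 0 \<cdot>\<^sub>m (mat_unit D 0 0 :: complex mat)"
    using D2 by (intro eq) (simp_all only: tr_unit, simp_all)
  then have "(1 \<cdot>\<^sub>m mat_unit D 0 0) $$ (0, 0) = (0 \<cdot>\<^sub>m (mat_unit D 0 0 :: complex mat)) $$ (0, 0)"
    by (rule arg_cong[where f = "\<lambda>X. X $$ (0, 0)"])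
  then show False
    using D2 by simp
qed

lemma multiple_if_dependent_doubleton:
  fixes f g :: "'x \<Rightarrow> 'a :: field"
  assumes "g \<noteq> 0" and "f \<noteq> g" and "module.dependent scale_fun {f, g}"
  shows "\<exists>k. f = scale_fun k g"
proof -
  interpret V: vector_space "scale_fun :: 'a \<Rightarrow> ('x \<Rightarrow> 'a) \<Rightarrow> _"
    by (rule vector_space_scale_fun)
  have "V.independent {g}"
    using assms(1) by simp
  then have "f \<in> V.span {g}"
    using assms(2,3) V.independent_insert[of f "{g}"] by auto
  then show ?thesis
    by (auto simp: V.span_singleton)
qed

lemma mat_eq_smult_if_entries_proportional:
  fixes X Y :: "'a :: field mat"
  assumes X: "X \<in> carrier_mat D D" and Y: "Y \<in> carrier_mat D D" and "Y $$ e0 \<noteq> 0"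
    and prop_entries: "\<And>e. e \<in> {..<D} \<times> {..<D} \<Longrightarrow> \<exists>k. X $$ e = k * X $$ e0 \<and> Y $$ e = k * Y $$ e0"
  shows "X = (X $$ e0 / Y $$ e0) \<cdot>\<^sub>m Y"
proof (rule eq_matI)
  fix i j assume "i < dim_row ((X $$ e0 / Y $$ e0) \<cdot>\<^sub>m Y)" and "j < dim_col ((X $$ e0 / Y $$ e0) \<cdot>\<^sub>m Y)"
  then have ij: "i < D" "j < D"
    using Y by auto
  then obtain k where k: "X $$ (i, j) = k * X $$ e0" "Y $$ (i, j) = k * Y $$ e0"
    using prop_entries[of "(i, j)"] by auto
  have "X $$ (i, j) = X $$ e0 / Y $$ e0 * Y $$ (i, j)"
    unfolding k using \<open>Y $$ e0 \<noteq> 0\<close> by simp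
  then show "X $$ (i, j) = ((X $$ e0 / Y $$ e0) \<cdot>\<^sub>m Y) $$ (i, j)"
    using ij Y by simp
qed (use X Y in auto)

lemma word_prods_proportional_if_entry_funs_dependent:
  assumes T: "tensor d D A"
    and dep: "\<And>e0 e1. e0 \<in> {..<D} \<times> {..<D} \<Longrightarrow> e1 \<in> {..<D} \<times> {..<D} \<Longrightarrow>
      entry_fun d D A l e0 \<noteq> entry_fun d D A l e1 \<Longrightarrow>
      module.dependent scale_fun {entry_fun d D A l e0, entry_fun d D A l e1}"
  shows "\<exists>M\<in>carrier_mat D D. \<forall>y\<in>configs d l. \<exists>c. word_prod D A l y = c \<cdot>\<^sub>m M"
proof (cases "\<forall>e\<in>{..<D} \<times> {..<D}. entry_fun d D A l e = 0")
  case True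
  have "word_prod D A l y = 0 \<cdot>\<^sub>m 0\<^sub>m D D" if y: "y \<in> configs d l" for y
  proof (rule eq_matI)
    fix i j assume "i < dim_row (0 \<cdot>\<^sub>m 0\<^sub>m D D :: complex mat)" "j < dim_col (0 \<cdot>\<^sub>m 0\<^sub>m D D :: complex mat)"
    then have "i < D" "j < D" "entry_fun d D A l (i, j) y = 0"
      using True by auto
    then show "word_prod D A l y $$ (i, j) = (0 \<cdot>\<^sub>m 0\<^sub>m D D) $$ (i, j)"
      using y by (simp add: entry_fun_def)
  qed (use word_prod_carrier_configs[OF T y] in auto)
  then show ?thesis
    by (intro bexI[of _ "0\<^sub>m D D"] ballI exI) auto
next
  case False
  let ?W = "word_prod D A l" and ?\<phi> = "entry_fun d D A l"
  from False obtain es where es: "es \<in> {..<D} \<times> {..<D}" and "?\<phi> es \<noteq> 0"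
    by blast
  then obtain y0 where "?\<phi> es y0 \<noteq> 0"
    by (auto simp: fun_eq_iff)
  then have y0: "y0 \<in> configs d l" "?W y0 $$ es \<noteq> 0"
    by (simp_all add: entry_fun_def split: if_splits)
  have multiple: "\<exists>k. ?\<phi> e = scale_fun k (?\<phi> es)" if e: "e \<in> {..<D} \<times> {..<D}" for e
  proof (cases "?\<phi> e = ?\<phi> es")
    case True
    then show ?thesis
      by (intro exI[of _ 1]) (simp add: scale_fun_def)
  next
    case False
    with dep[OF e es False] \<open>?\<phi> es \<noteq> 0\<close> show ?thesis
      by (intro multiple_if_dependent_doubleton)
  qed
  have "\<exists>k. ?W y $$ e = k * ?W y $$ es \<and> ?W y0 $$ e = k * ?W y0 $$ es"
    if e: "e \<in> {..<D} \<times> {..<D}" and y: "y \<in> configs d l" for e y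
  proof -
    obtain k where "?\<phi> e = scale_fun k (?\<phi> es)"
      using multiple[OF e] by blast
    then have "?\<phi> e y = k * ?\<phi> es y" "?\<phi> e y0 = k * ?\<phi> es y0"
      by (simp_all add: scale_fun_def)
    then show ?thesis
      using y y0(1) by (auto simp: entry_fun_def)
  qed
  then have "?W y = (?W y $$ es / ?W y0 $$ es) \<cdot>\<^sub>m ?W y0" if "y \<in> configs d l" for y
    using that by (intro mat_eq_smult_if_entries_proportional[OF word_prod_carrier_configs[OF T that]
          word_prod_carrier_configs[OF T y0(1)] y0(2)]) auto
  then show ?thesis
    using word_prod_carrier_configs[OF T y0(1)] by blast
qed

text \<open>This covers block lengths \<open>l\<close> below the injectivity length.\<close>

lemma two_separated_entries:
  assumes T: "tensor d D A" and D2: "2 \<le> D" and inj: "injective_block d D A (l * k)"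
  shows "\<exists>E. card E = 2 \<and> separated_entries d D A l E"
proof (rule ccontr)
  let ?\<phi> = "entry_fun d D A l"
  assume none: "\<nexists>E. card E = 2 \<and> separated_entries d D A l E"
  have dep: "module.dependent scale_fun {?\<phi> e0, ?\<phi> e1}"
    if e: "e0 \<in> {..<D} \<times> {..<D}" "e1 \<in> {..<D} \<times> {..<D}" and ne: "?\<phi> e0 \<noteq> ?\<phi> e1" for e0 e1
  proof (rule ccontr)
    assume indep: "\<not> module.dependent scale_fun {?\<phi> e0, ?\<phi> e1}"
    have "e0 \<noteq> e1"
      using ne by (rule contrapos_nn) simp
    with ne have "inj_on ?\<phi> {e0, e1}"
      by (simp add: inj_on_insert)
    then have "separated_entries d D A l {e0, e1}"
      using e indep by (intro separated_entries_if_independent) simp_all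
    moreover have "card {e0, e1} = 2"
      using \<open>e0 \<noteq> e1\<close> by simp
    ultimately show False
      using none by blast
  qed
  obtain M where M: "M \<in> carrier_mat D D"
    and proportional: "\<And>y. y \<in> configs d l \<Longrightarrow> \<exists>c. word_prod D A l y = c \<cdot>\<^sub>m M"
    using word_prods_proportional_if_entry_funs_dependent[OF T dep] by blast
  have "\<not> injective_block d D A (l * k)"
    by (rule not_injective_block_if_proportional[OF T D2 pow_carrier_mat[OF M]])
      (rule word_prod_proportional_power[OF T M proportional])
  with inj show False
    by contradiction
qed

section \<open>Schmidt rank across alternating cuts\<close>

definition restrict_cfg :: "nat set \<Rightarrow> (nat \<Rightarrow> nat) \<Rightarrow> nat \<Rightarrow> nat" where
  "restrict_cfg S i = (\<lambda>n. if n \<in> S then i n else 0)"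

lemma schmidt_rank_leE:
  assumes "schmidt_rank_le d N \<psi> S D"
  obtains u v where "\<And>i. i \<in> configs d N \<Longrightarrow>
    \<psi> i = (\<Sum>k<D. u k (restrict_cfg S i) * v k (restrict_cfg (- S) i))"
proof -
  have "(\<lambda>n. if n \<in> S then 0 else i n) = restrict_cfg (- S) i" for i
    by (auto simp: restrict_cfg_def fun_eq_iff)
  with assms that show ?thesis
    unfolding schmidt_rank_le_def restrict_cfg_def[symmetric] by metis
qed

lemma sum_configs_restrict_cfg_mult:
  "(\<Sum>i\<in>configs d N. f (restrict_cfg S i) * g (restrict_cfg (- S) i))
    = (\<Sum>x\<in>restrict_cfg S ` configs d N. f x)
      * (\<Sum>y\<in>restrict_cfg (- S) ` configs d N. g y :: 'a :: comm_semiring_0)"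
proof -
  let ?X = "restrict_cfg S ` configs d N" and ?Y = "restrict_cfg (- S) ` configs d N"
  have "bij_betw (\<lambda>i. (restrict_cfg S i, restrict_cfg (- S) i)) (configs d N) (?X \<times> ?Y)"
    by (rule bij_betw_byWitness[where f' = "\<lambda>(x, y) n. if n \<in> S then x n else y n"])
       (auto simp: restrict_cfg_def configs_def fun_eq_iff)
  then have "(\<Sum>i\<in>configs d N. f (restrict_cfg S i) * g (restrict_cfg (- S) i))
      = (\<Sum>(x, y)\<in>?X \<times> ?Y. f x * g y)"
    by (simp add: sum.reindex_bij_betw[symmetric,
          where h = "\<lambda>i. (restrict_cfg S i, restrict_cfg (- S) i)"])
  also have "\<dots> = (\<Sum>x\<in>?X. f x) * (\<Sum>y\<in>?Y. g y)"
    by (simp add: sum_product sum.cartesian_product)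
  finally show ?thesis .
qed

lemma card_le_if_schmidt_rank_le:
  fixes \<alpha> \<beta> :: "'i \<Rightarrow> (nat \<Rightarrow> nat) \<Rightarrow> complex"
  assumes rank: "schmidt_rank_le d N \<psi> S D" and I: "finite I"
    and biorth: "\<And>a b. a \<in> I \<Longrightarrow> b \<in> I \<Longrightarrow>
      (\<Sum>i\<in>configs d N. \<alpha> a (restrict_cfg S i) * \<beta> b (restrict_cfg (- S) i) * \<psi> i)
        = (if a = b then 1 else 0)"
  shows "card I \<le> D"
proof -
  obtain u v where \<psi>: "\<And>i. i \<in> configs d N \<Longrightarrow>
      \<psi> i = (\<Sum>k<D. u k (restrict_cfg S i) * v k (restrict_cfg (- S) i))"
    using schmidt_rank_leE[OF rank] by blast
  let ?X = "restrict_cfg S ` configs d N" and ?Y = "restrict_cfg (- S) ` configs d N"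
  show ?thesis
  proof (rule card_le_if_biorthogonal[OF I])
    fix a b assume a: "a \<in> I" and b: "b \<in> I"
    have "(\<Sum>k<D. (\<Sum>x\<in>?X. \<alpha> a x * u k x) * (\<Sum>y\<in>?Y. \<beta> b y * v k y))
        = (\<Sum>k<D. \<Sum>i\<in>configs d N. \<alpha> a (restrict_cfg S i) * u k (restrict_cfg S i)
            * (\<beta> b (restrict_cfg (- S) i) * v k (restrict_cfg (- S) i)))"
      by (rule sum.cong[OF refl], rule sum_configs_restrict_cfg_mult[symmetric])
    also have "\<dots> = (\<Sum>i\<in>configs d N. \<alpha> a (restrict_cfg S i) * \<beta> b (restrict_cfg (- S) i)
        * (\<Sum>k<D. u k (restrict_cfg S i) * v k (restrict_cfg (- S) i)))"
      by (subst sum.swap) (simp add: sum_distrib_left ac_simps)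
    also have "\<dots> = (if a = b then 1 else 0)"
      using biorth[OF a b] \<psi> by simp
    finally show "(\<Sum>k<D. (\<Sum>x\<in>?X. \<alpha> a x * u k x) * (\<Sum>y\<in>?Y. \<beta> b y * v k y))
        = (if a = b then 1 else 0)" .
  qed
qed

text \<open>An alternating cut consists of \<open>n\<close> rounds, each a block of \<open>L\<close> sites on the left side
  followed by a block of \<open>lv j\<close> sites on the right side; \<open>alt_left\<close> and \<open>alt_right\<close> are the product
  functionals built from one functional per left resp. right block.\<close>

fun alt_sites :: "nat \<Rightarrow> nat \<Rightarrow> (nat \<Rightarrow> nat) \<Rightarrow> nat set" where
  "alt_sites L 0 lv = {}"
| "alt_sites L (Suc n) lv = {..<L} \<union> (\<lambda>k. k + (L + lv 0)) ` alt_sites L n (\<lambda>j. lv (Suc j))"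

fun alt_left ::
    "nat \<Rightarrow> nat \<Rightarrow> (nat \<Rightarrow> (nat \<Rightarrow> nat) \<Rightarrow> complex) \<Rightarrow> (nat \<Rightarrow> nat) \<Rightarrow> (nat \<Rightarrow> nat) \<Rightarrow> complex" where
  "alt_left L 0 \<sigma> lv x = 1"
| "alt_left L (Suc n) \<sigma> lv x =
     \<sigma> 0 (take_cfg L x) * alt_left L n (\<lambda>j. \<sigma> (Suc j)) (\<lambda>j. lv (Suc j)) (drop_cfg (L + lv 0) x)"

fun alt_right ::
    "nat \<Rightarrow> nat \<Rightarrow> (nat \<Rightarrow> (nat \<Rightarrow> nat) \<Rightarrow> complex) \<Rightarrow> (nat \<Rightarrow> nat) \<Rightarrow> (nat \<Rightarrow> nat) \<Rightarrow> complex" where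
  "alt_right L 0 \<gamma> lv y = 1"
| "alt_right L (Suc n) \<gamma> lv y =
     \<gamma> 0 (take_cfg (lv 0) (drop_cfg L y))
       * alt_right L n (\<lambda>j. \<gamma> (Suc j)) (\<lambda>j. lv (Suc j)) (drop_cfg (L + lv 0) y)"

lemma alt_sites_subset: "alt_sites L n lv \<subseteq> {..<(\<Sum>j<n. L + lv j)}"
proof (induction n arbitrary: lv)
  case (Suc n)
  have "(\<Sum>j<Suc n. L + lv j) = L + lv 0 + (\<Sum>j<n. L + lv (Suc j))"
    by (simp only: sum.lessThan_Suc_shift)
  with Suc.IH[of "\<lambda>j. lv (Suc j)"] show ?case
    by auto
qed simp

lemma alt_left_restrict_cfg:
  "alt_left L n \<sigma> lv (restrict_cfg (alt_sites L n lv) x) = alt_left L n \<sigma> lv x"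
proof (induction n arbitrary: \<sigma> lv x)
  case (Suc n)
  have "take_cfg L (restrict_cfg (alt_sites L (Suc n) lv) x) = take_cfg L x"
    by (auto simp: take_cfg_def restrict_cfg_def fun_eq_iff)
  moreover have "drop_cfg (L + lv 0) (restrict_cfg (alt_sites L (Suc n) lv) x)
      = restrict_cfg (alt_sites L n (\<lambda>j. lv (Suc j))) (drop_cfg (L + lv 0) x)"
    by (auto simp: drop_cfg_def restrict_cfg_def fun_eq_iff)
  ultimately show ?case
    using Suc.IH by simp
qed simp

lemma alt_right_restrict_cfg:
  "alt_right L n \<gamma> lv (restrict_cfg (- alt_sites L n lv) y) = alt_right L n \<gamma> lv y"
proof (induction n arbitrary: \<gamma> lv y)
  case (Suc n)
  have "take_cfg (lv 0) (drop_cfg L (restrict_cfg (- alt_sites L (Suc n) lv) y))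
      = take_cfg (lv 0) (drop_cfg L y)"
    by (auto simp: take_cfg_def drop_cfg_def restrict_cfg_def fun_eq_iff)
  moreover have "drop_cfg (L + lv 0) (restrict_cfg (- alt_sites L (Suc n) lv) y)
      = restrict_cfg (- alt_sites L n (\<lambda>j. lv (Suc j))) (drop_cfg (L + lv 0) y)"
    by (auto simp: drop_cfg_def restrict_cfg_def fun_eq_iff)
  ultimately show ?case
    using Suc.IH by simp
qed simp

lemma word_comb_alternating:
  assumes T: "tensor d D A"
  shows "word_comb d D A (\<lambda>i. alt_left L n \<sigma> lv i * alt_right L n \<gamma> lv i) (\<Sum>j<n. L + lv j)
       = mat_prod D n (\<lambda>j. word_comb d D A (\<sigma> j) L * word_comb d D A (\<gamma> j) (lv j))"
proof (induction n arbitrary: \<sigma> \<gamma> lv)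
  case 0
  have "configs d 0 = {\<lambda>_. 0}"
    by (auto simp: configs_def)
  then show ?case
    by (auto simp: word_comb_def intro!: eq_matI)
next
  case (Suc n)
  define a where "a = L + lv 0"
  define f where "f = (\<lambda>x. \<sigma> 0 (take_cfg L x) * \<gamma> 0 (take_cfg (lv 0) (drop_cfg L x)))"
  define g where "g = (\<lambda>y. alt_left L n (\<lambda>j. \<sigma> (Suc j)) (\<lambda>j. lv (Suc j)) y
                         * alt_right L n (\<lambda>j. \<gamma> (Suc j)) (\<lambda>j. lv (Suc j)) y)"
  have split: "alt_left L (Suc n) \<sigma> lv i * alt_right L (Suc n) \<gamma> lv i
      = f (take_cfg a i) * g (drop_cfg a i)" for i
  proof -
    have "take_cfg L (take_cfg a i) = take_cfg L i"
      and "take_cfg (lv 0) (drop_cfg L (take_cfg a i)) = take_cfg (lv 0) (drop_cfg L i)"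
      by (auto simp: take_cfg_def drop_cfg_def a_def fun_eq_iff)
    then show ?thesis
      by (simp add: f_def g_def a_def ac_simps)
  qed
  have first: "word_comb d D A f a = word_comb d D A (\<sigma> 0) L * word_comb d D A (\<gamma> 0) (lv 0)"
    unfolding a_def f_def by (rule word_comb_append_take[OF T])
  have "(\<Sum>j<Suc n. L + lv j) = a + (\<Sum>j<n. L + lv (Suc j))"
    by (simp only: a_def sum.lessThan_Suc_shift)
  then have "word_comb d D A (\<lambda>i. alt_left L (Suc n) \<sigma> lv i * alt_right L (Suc n) \<gamma> lv i)
        (\<Sum>j<Suc n. L + lv j)
      = word_comb d D A (\<lambda>i. f (take_cfg a i) * g (drop_cfg a i)) (a + (\<Sum>j<n. L + lv (Suc j)))"
    by (simp only: split)
  also have "\<dots> = word_comb d D A f a * word_comb d D A g (\<Sum>j<n. L + lv (Suc j))"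
    by (rule word_comb_append[OF T])
  also have "\<dots> = mat_prod D (Suc n) (\<lambda>j. word_comb d D A (\<sigma> j) L * word_comb d D A (\<gamma> j) (lv j))"
    using Suc.IH unfolding first g_def by simp
  finally show ?case .
qed

lemma alternating_pairing_mat_units:
  assumes T: "tensor d D A" and N: "N = (\<Sum>j<Suc m. L + lv j)"
    and unit: "\<And>j. j \<le> m \<Longrightarrow> word_comb d D A (\<sigma> j) L = mat_unit D (P j) (R j)"
    and PR: "\<And>j. j \<le> m \<Longrightarrow> P j < D" "\<And>j. j \<le> m \<Longrightarrow> R j < D"
  shows "(\<Sum>i\<in>configs d N. alt_left L (Suc m) \<sigma> lv (restrict_cfg (alt_sites L (Suc m) lv) i)
            * alt_right L (Suc m) \<gamma> lv (restrict_cfg (- alt_sites L (Suc m) lv) i) * ti_mps D A N i)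
       = (\<Prod>j<m. word_comb d D A (\<gamma> j) (lv j) $$ (R j, P (Suc j)))
           * word_comb d D A (\<gamma> m) (lv m) $$ (R m, P 0)"
proof -
  let ?B = "\<lambda>j. word_comb d D A (\<gamma> j) (lv j)"
  have "(\<Sum>i\<in>configs d N. alt_left L (Suc m) \<sigma> lv (restrict_cfg (alt_sites L (Suc m) lv) i)
            * alt_right L (Suc m) \<gamma> lv (restrict_cfg (- alt_sites L (Suc m) lv) i) * ti_mps D A N i)
      = (\<Sum>i\<in>configs d N. (alt_left L (Suc m) \<sigma> lv i * alt_right L (Suc m) \<gamma> lv i) * ti_mps D A N i)"
    by (simp only: alt_left_restrict_cfg alt_right_restrict_cfg)
  also have "\<dots> = mtrace (word_comb d D A (\<lambda>i. alt_left L (Suc m) \<sigma> lv i * alt_right L (Suc m) \<gamma> lv i) N)"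
    by (rule mtrace_word_comb[OF T, symmetric])
  also have "\<dots> = mtrace (mat_prod D (Suc m) (\<lambda>j. word_comb d D A (\<sigma> j) L * ?B j))"
    unfolding N by (simp only: word_comb_alternating[OF T])
  also have "mat_prod D (Suc m) (\<lambda>j. word_comb d D A (\<sigma> j) L * ?B j)
      = mat_prod D (Suc m) (\<lambda>j. mat_unit D (P j) (R j) * ?B j)"
    by (rule mat_prod_cong) (simp add: unit)
  also have "mtrace \<dots> = (\<Prod>j<m. ?B j $$ (R j, P (Suc j))) * ?B m $$ (R m, P 0)"
    by (rule mtrace_mat_prod_mat_unit_chain) (auto simp: PR)
  finally show ?thesis .
qed

lemma prod_indicator_PiE:
  fixes a b :: "nat \<Rightarrow> 'b"
  assumes "a \<in> (\<Pi>\<^sub>E j\<in>{..m}. X j)" and "b \<in> (\<Pi>\<^sub>E j\<in>{..m}. X j)"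
  shows "(\<Prod>j<m. if a j = b j then 1 else 0) * (if a m = b m then 1 else 0)
    = (if a = b then 1 else (0 :: 'a :: comm_semiring_1))"
proof -
  have "(\<Prod>j<k. if a j = b j then 1 else (0 :: 'a)) = (if \<forall>j<k. a j = b j then 1 else 0)" for k :: nat
    by (induction k) (auto simp: less_Suc_eq)
  moreover have "a = b \<longleftrightarrow> (\<forall>j<m. a j = b j) \<and> a m = b m"
    using PiE_ext[OF assms] by (auto simp: le_less)
  ultimately show ?thesis
    by auto
qed

text \<open>The index \<open>a\<close> assigns an entry \<open>a j = (x j, y j)\<close> to each right block. The \<open>j\<close>-th left
  block realises the matrix unit with index \<open>(y (j - 1), x j)\<close> (cyclically), the \<open>j\<close>-th right block
  realises the matrix unit \<open>b j\<close>, resp. the combination separating \<open>b m\<close> within \<open>E\<close>; the trace of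
  the resulting chain is the indicator of \<open>a = b\<close>.\<close>

lemma exact_mps_up_bond_dim_ge_alternating:
  assumes T: "tensor d D1 A" and inj: "injective_block d D1 A L"
    and sep: "separated_entries d D1 A r E"
    and N: "N = (2 * m + 1) * L + r"
    and mps: "exact_mps_up d N (ti_mps D1 A N) D"
  shows "(D1 ^ 2) ^ m * card E \<le> D"
proof -
  let ?B = "{..<D1} \<times> {..<D1}"
  define lv where "lv = (\<lambda>j. if j < m then L else r)"
  define S where "S = alt_sites L (Suc m) lv"
  define I where "I = (\<Pi>\<^sub>E j\<in>{..m}. if j < m then ?B else E)"
  have E: "E \<subseteq> ?B"
    using sep by (simp add: separated_entries_def)
  have N_alt: "N = (\<Sum>j<Suc m. L + lv j)"
    by (simp add: N lv_def algebra_simps)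
  obtain \<sigma>U where \<sigma>U: "\<And>e. e \<in> ?B \<Longrightarrow> word_comb d D1 A (\<sigma>U e) L = mat_unit D1 (fst e) (snd e)"
    using mat_units_word_combs[OF T inj] by blast
  obtain \<gamma>E where \<gamma>E: "\<And>t e. t \<in> E \<Longrightarrow> e \<in> E \<Longrightarrow> word_comb d D1 A (\<gamma>E t) r $$ e = (if e = t then 1 else 0)"
    using sep unfolding separated_entries_def by blast
  have I_B: "a j \<in> ?B" if "a \<in> I" "j \<le> m" for a j
    using PiE_mem[OF that(1)[unfolded I_def], of j] that(2) E by (auto split: if_splits)
  have "card I = (D1 ^ 2) ^ m * card E"
    by (simp add: I_def card_PiE lessThan_Suc_atMost[symmetric] card_cartesian_product power2_eq_square)
  moreover have "card I \<le> D"
  proof (rule card_le_if_schmidt_rank_le)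
    have "S \<subseteq> {0..<N}"
      unfolding S_def N_alt atLeast0LessThan by (rule alt_sites_subset)
    then show "schmidt_rank_le d N (ti_mps D1 A N) S D"
      using mps unfolding exact_mps_up_def by blast
    show "finite I"
      unfolding I_def using E by (intro finite_PiE) (auto intro: finite_subset)
  next
    fix a b assume a: "a \<in> I" and b: "b \<in> I"
    define P where "P = (\<lambda>j. snd (a (if j = 0 then m else j - 1)))"
    define R where "R = (\<lambda>j. fst (a j))"
    let ?\<gamma> = "\<lambda>j. if j < m then \<sigma>U (b j) else \<gamma>E (b m)"
    have PR: "P j < D1" "R j < D1" if "j \<le> m" for j
    proof -
      have "(if j = 0 then m else j - 1) \<le> m"
        using that by auto
      from I_B[OF a this] I_B[OF a that] show "P j < D1" "R j < D1"
        by (auto simp: P_def R_def)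
    qed
    have "(\<Sum>i\<in>configs d N. alt_left L (Suc m) (\<lambda>j. \<sigma>U (P j, R j)) lv (restrict_cfg S i)
            * alt_right L (Suc m) ?\<gamma> lv (restrict_cfg (- S) i) * ti_mps D1 A N i)
        = (\<Prod>j<m. word_comb d D1 A (?\<gamma> j) (lv j) $$ (R j, P (Suc j)))
            * word_comb d D1 A (?\<gamma> m) (lv m) $$ (R m, P 0)"
      unfolding S_def using PR by (intro alternating_pairing_mat_units[OF T N_alt]) (simp_all add: \<sigma>U)
    also have "\<dots> = (\<Prod>j<m. word_comb d D1 A (?\<gamma> j) (lv j) $$ a j) * word_comb d D1 A (?\<gamma> m) (lv m) $$ a m"
      by (simp add: P_def R_def)
    also have "\<dots> = (\<Prod>j<m. if a j = b j then 1 else 0) * (if a m = b m then 1 else 0)"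
      using I_B[OF a] I_B[OF b] PiE_mem[OF a[unfolded I_def], of m] PiE_mem[OF b[unfolded I_def], of m]
      by (simp add: lv_def \<sigma>U \<gamma>E index_mat_unit_pair)
    also have "\<dots> = (if a = b then 1 else 0)"
      using a b unfolding I_def by (rule prod_indicator_PiE)
    finally show "(\<Sum>i\<in>configs d N. alt_left L (Suc m) (\<lambda>j. \<sigma>U (P j, R j)) lv (restrict_cfg S i)
            * alt_right L (Suc m) ?\<gamma> lv (restrict_cfg (- S) i) * ti_mps D1 A N i)
        = (if a = b then 1 else 0)" .
  qed
  ultimately show ?thesis
    by simp
qed


lemma exact_mps_up_bond_dim_ge_two_power:
  assumes T: "tensor d D1 A" and D1: "2 \<le> D1"
    and inj: "\<And>l. L \<le> l \<Longrightarrow> injective_block d D1 A l"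
    and n: "1 \<le> n" "n * L < N"
    and mps: "exact_mps_up d N (ti_mps D1 A N) D"
  shows "2 ^ n \<le> D"
proof -
  have four: "4 ^ k \<le> (D1 ^ 2) ^ k" for k
    using power_mono[OF D1, of 2] by (intro power_mono) simp_all
  have "n = 2 * ((n - 1) div 2) + 1 \<or> n = 2 * ((n - 1) div 2) + 2"
    using n(1) by presburger
  then consider (odd) m where "n = 2 * m + 1" | (even) m where "n = 2 * m + 2"
    by blast
  then show ?thesis
  proof cases
    case odd
    define r where "r = N - (2 * m + 1) * L"
    have N: "N = (2 * m + 1) * L + r" and r: "1 \<le> r"
      using n(2) odd by (simp_all add: r_def)
    obtain E where E: "card E = 2" "separated_entries d D1 A r E"
      using two_separated_entries[OF T D1 inj[of "r * L"]] r by auto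
    have "(2 :: nat) ^ n = 2 * 4 ^ m"
      by (simp add: odd power_mult)
    also have "\<dots> \<le> (D1 ^ 2) ^ m * card E"
      using four[of m] E(1) by simp
    also have "\<dots> \<le> D"
      by (rule exact_mps_up_bond_dim_ge_alternating[OF T inj[OF order_refl] E(2) N mps])
    finally show ?thesis .
  next
    case even
    define r where "r = N - (2 * m + 1) * L"
    have N: "N = (2 * m + 1) * L + r" and r: "L \<le> r"
      using n(2) even by (simp_all add: r_def algebra_simps)
    have "(2 :: nat) ^ n = 4 ^ (m + 1)"
      by (simp add: even power_mult)
    also have "\<dots> \<le> (D1 ^ 2) ^ m * card ({..<D1} \<times> {..<D1})"
      using four[of "m + 1"] by (simp add: card_cartesian_product power2_eq_square ac_simps)
    also have "\<dots> \<le> D"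
      by (rule exact_mps_up_bond_dim_ge_alternating[OF T inj[OF order_refl]
            separated_entries_if_injective_block[OF T inj[OF r]] N mps])
    finally show ?thesis .
  qed
qed

lemma less_two_power_if_log_less:
  assumes "log 2 (real D) < real n"
  shows "D < 2 ^ n"
proof (cases "D = 0")
  case False
  then have "real D < 2 powr real n"
    using assms by (simp add: log_less_iff)
  then have "real D < real (2 ^ n)"
    by (simp add: powr_realpow)
  then show ?thesis
    by (simp only: of_nat_less_iff)
qed simp

lemma exists_block_count_two_power_gt:
  assumes L: "1 \<le> L" and N: "real N > real L * (log 2 (real D) + 1)"
  shows "\<exists>n\<ge>1. n * L < N \<and> D < 2 ^ n"
proof -
  define n where "n = (N - 1) div L"
  have log_nonneg: "0 \<le> log 2 (real D)"
    by (cases "D = 0") (simp_all add: log_def)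
  then have "real L * 1 \<le> real L * (log 2 (real D) + 1)"
    by (intro mult_left_mono) simp_all
  then have "real L < real N"
    using N by linarith
  then have "L < N"
    by simp
  have "n * L \<le> N - 1"
    by (simp add: n_def div_times_less_eq_dividend)
  then have nL: "n * L < N"
    using \<open>L < N\<close> by linarith
  have "N - 1 < (n + 1) * L"
    using L by (simp add: n_def dividend_less_div_times)
  then have "real N \<le> real ((n + 1) * L)"
    by (simp only: of_nat_le_iff)
  also have "\<dots> = real L * (real n + 1)"
    by (simp add: algebra_simps)
  finally have "real N \<le> real L * (real n + 1)" .
  then have "real L * (log 2 (real D) + 1) < real L * (real n + 1)"
    using N by linarith
  then have "log 2 (real D) < real n"
    using L by (simp add: mult_less_cancel_left_pos)
  then have "D < 2 ^ n"
    by (rule less_two_power_if_log_less)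
  moreover have "1 \<le> n"
    using \<open>L < N\<close> L by (simp add: n_def div_greater_zero_iff Suc_le_eq)
  ultimately show ?thesis
    using nL by blast
qed

lemma normal_tensor_bond_dim_pos:
  assumes "normal_tensor d D A"
  shows "0 < D"
proof (rule ccontr)
  assume "\<not> 0 < D"
  then have "X = 0\<^sub>m D D" if "X \<in> carrier_mat D D" for X :: "complex mat"
    using that by (intro eq_matI) auto
  then show False
    using assms by (auto simp: normal_tensor_def transfer_eigenvalue_def)
qed

lemma word_prod_bond_dim_one:
  "tensor d 1 A \<Longrightarrow> (\<And>n. n < l \<Longrightarrow> i n < d) \<Longrightarrow> word_prod 1 A l i $$ (0, 0) = (\<Prod>n<l. A (i n) $$ (0, 0))"
proof (induction l arbitrary: i)
  case (Suc l)
  have W: "word_prod 1 A l (drop_cfg 1 i) \<in> carrier_mat 1 1"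
    using Suc.prems by (intro word_prod_carrier) (auto simp: drop_cfg_def)
  have "A (i 0) \<in> carrier_mat 1 1"
    using Suc.prems by (simp add: tensor_def)
  then have "word_prod 1 A (Suc l) i $$ (0, 0)
      = A (i 0) $$ (0, 0) * word_prod 1 A l (drop_cfg 1 i) $$ (0, 0)"
    using W by (simp add: word_prod_Suc index_mult_mat_sum del: index_mult_mat(1))
  also have "word_prod 1 A l (drop_cfg 1 i) $$ (0, 0) = (\<Prod>n<l. A (i (Suc n)) $$ (0, 0))"
    using Suc by (simp add: drop_cfg_def)
  finally show ?case
    by (simp only: prod.lessThan_Suc_shift)
qed simp

lemma ti_mps_bond_dim_one:
  assumes "tensor d 1 A" and "i \<in> configs d N"
  shows "ti_mps 1 A N i = (\<Prod>n<N. A (i n) $$ (0, 0))"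
  using word_prod_bond_dim_one[OF assms(1), of N i] word_prod_carrier_configs[OF assms] assms(2)
  by (simp add: ti_mps_def mtrace_def configs_def)

theorem proposition1:
  fixes d D1 D N LI :: nat and A :: "nat \<Rightarrow> complex mat"
  assumes "normal_tensor d D1 A"
    and "injectivity_length d D1 A LI"
    and "exact_mps_up d N (ti_mps D1 A N) D"
    and "real N > real LI * (log 2 (real D) + 1)"
  shows "\<exists>\<phi> :: nat \<Rightarrow> complex. \<forall>i\<in>configs d N. ti_mps D1 A N i = (\<Prod>n<N. \<phi> (i n))"
proof -
  have T: "tensor d D1 A"
    using assms(1) by (simp add: normal_tensor_def)
  have LI: "1 \<le> LI" and inj: "\<And>l. LI \<le> l \<Longrightarrow> injective_block d D1 A l"
    using assms(2) by (simp_all add: injectivity_length_def)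
  consider "D1 = 1" | "2 \<le> D1"
    using normal_tensor_bond_dim_pos[OF assms(1)] by linarith
  then show ?thesis
  proof cases
    case 1
    with T show ?thesis
      using ti_mps_bond_dim_one[of d A] by (intro exI[of _ "\<lambda>j. A j $$ (0, 0)"]) auto
  next
    case 2
    obtain n where n: "1 \<le> n" "n * LI < N" "D < 2 ^ n"
      using exists_block_count_two_power_gt[OF LI assms(4)] by blast
    with exact_mps_up_bond_dim_ge_two_power[OF T 2 inj n(1,2) assms(3)] show ?thesis
      by simp
  qed
qed

end
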